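(* Consider an instance of the Nash equilibrium complementarity problem (NECP) that satisfies the dominance condition, and the instance of the tropical Nash equilibrium complementarity problem (TNECP) given by its logarithmic image ($M^-=\log(-M)$, $q^+=\log q$). The sequence of bases over which the Lemke--Howson algorithm iterates does not depend on whether it is applied to the classical instance or the tropical one. In particular, it returns a basis of a solution of the classical instance within at most $2n-1$ iterations.
   Context: NECP: given $n\times n$ real $M$ with nonpositive columns each having a negative entry and $q>0$, find $(w,z)$ with $w=Mz+q$, $w^\top z=0$, $z\neq 0$, $w,z\geq0$; written as $(I\ \ -M)\binom{w}{z}=q$ with columns indexed by $[n]\uplus[n]$ (blue copy for $w$, red for $z$). TNECP over max-plus $\mathbb{T}=\mathbb{R}\cup\{-\infty\}$: $w\oplus M^-\odot z=q^+$, $w^\top\odot z=-\infty$, $z\neq-\infty$. Classical bases are feasible bases of the linear system; tropical bases of $A\odot x=b$ are $B$ with $|B|=n$ and a bijection $\phi:[n]\to B$ such that $b_i-A_{i\phi(i)}\in\mathbb{T}$ is minimal among $b_k-A_{k\phi(i)}$. Dominance condition: the normalized matrix $(\operatorname{diag} q)^{-1}(I\ \ -M)(\operatorname{diag} u)^{-1}$ ($u_j$ = max entry of column $j$ of $(\operatorname{diag} q)^{-1}(I\ \ -M)$) satisfies (a) some $n\times n$ submatrix covers a permutation matrix and (b) every $n\times n$ submatrix covering a permutation matrix has all row sums less than $2$; under it both systems are nondegenerate. The Lemke--Howson algorithm, for fixed $j^\star\in[n]$, starts from basis $[n]\uplus\varnothing$ with entering element $(j^\star,\text{red})$, repeatedly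 pivots to the unique other basis in $B\cup\{\gamma\}$, takes as next entering element the twin (same label, other color) of the leaving element, and stops at a fully labeled basis (all labels $1,\dots,n$ appear). *)

theory Defs
  imports "HOL-Analysis.Analysis"
begin

text \<open>Column indices are ('n + 'n): Inl j is the blue copy (variable w_j),
  Inr j is the red copy (variable z_j). The label of both is j.\<close>

fun twin :: "'n + 'n \<Rightarrow> 'n + 'n" where
  "twin (Inl j) = Inr j"
| "twin (Inr j) = Inl j"

definition fully_labeled :: "('n + 'n) set \<Rightarrow> bool" where
  "fully_labeled B \<longleftrightarrow> (\<forall>i. Inl i \<in> B \<or> Inr i \<in> B)"

definition NECP_instance :: "real^'n^'n \<Rightarrow> real^'n \<Rightarrow> bool" where
  "NECP_instance M q \<longleftrightarrow>
     (\<forall>i j. M$i$j \<le> 0) \<and> (\<forall>j. \<exists>i. M$i$j < 0) \<and> (\<forall>i. q$i > 0)"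

definition NECP_solution :: "real^'n^'n \<Rightarrow> real^'n \<Rightarrow> real^'n \<Rightarrow> real^'n \<Rightarrow> bool" where
  "NECP_solution M q w z \<longleftrightarrow>
     w = M *v z + q \<and> w \<bullet> z = 0 \<and> z \<noteq> 0 \<and> (\<forall>i. w$i \<ge> 0) \<and> (\<forall>i. z$i \<ge> 0)"

definition NECP_matrix :: "real^'n^'n \<Rightarrow> real^('n + 'n)^'n" where
  "NECP_matrix M = (\<chi> i c. case c of Inl j \<Rightarrow> (if i = j then 1 else 0) | Inr j \<Rightarrow> - M$i$j)"

definition classical_basis :: "real^'c::finite^'m \<Rightarrow> real^'m \<Rightarrow> 'c set \<Rightarrow> bool" where
  "classical_basis A b B \<longleftrightarrow>
     card B = CARD('m) \<and> inj_on (\<lambda>c. column c A) B \<and>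
     independent ((\<lambda>c. column c A) ` B) \<and>
     (\<exists>x :: 'c \<Rightarrow> real. (\<forall>c. 0 \<le> x c) \<and> (\<forall>c. c \<notin> B \<longrightarrow> x c = 0) \<and>
        (\<Sum>c\<in>B. x c *\<^sub>R column c A) = b)"

text \<open>Tropical semiring T = R \<union> {-\<infinity>} modelled inside ereal (never using +\<infinity> as an entry).
  Logarithm with log 0 = -\<infinity>.\<close>
definition trop_log :: "real \<Rightarrow> ereal" where
  "trop_log x = (if x > 0 then ereal (ln x) else -\<infinity>)"

definition TNECP_matrix :: "real^'n^'n \<Rightarrow> ereal^('n + 'n)^'n" where
  "TNECP_matrix M = (\<chi> i c. case c of Inl j \<Rightarrow> (if i = j then 0 else -\<infinity>)
                                       | Inr j \<Rightarrow> trop_log (- M$i$j))"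

definition TNECP_rhs :: "real^'n \<Rightarrow> ereal^'n" where
  "TNECP_rhs q = (\<chi> i. trop_log (q$i))"

definition tropical_basis :: "ereal^'c::finite^'m \<Rightarrow> ereal^'m \<Rightarrow> 'c set \<Rightarrow> bool" where
  "tropical_basis A b B \<longleftrightarrow>
     card B = CARD('m) \<and>
     (\<exists>\<phi>. bij_betw \<phi> (UNIV :: 'm set) B \<and>
        (\<forall>i. b$i - A$i$(\<phi> i) \<noteq> \<infinity> \<and>
             (\<forall>k. b$i - A$i$(\<phi> i) \<le> b$k - A$k$(\<phi> i))))"

definition scaled_matrix :: "real^'n^'n \<Rightarrow> real^'n \<Rightarrow> real^('n + 'n)^'n" where
  "scaled_matrix M q = (\<chi> i c. (NECP_matrix M)$i$c / q$i)"

definition col_max :: "real^'n^'n \<Rightarrow> real^'n \<Rightarrow> 'n + 'n \<Rightarrow> real" where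
  "col_max M q c = (MAX i. (scaled_matrix M q)$i$c)"

definition normalized_matrix :: "real^'n^'n \<Rightarrow> real^'n \<Rightarrow> real^('n + 'n)^'n" where
  "normalized_matrix M q = (\<chi> i c. (scaled_matrix M q)$i$c / col_max M q c)"

definition covers_permutation :: "real^('n + 'n)^'n \<Rightarrow> ('n + 'n) set \<Rightarrow> bool" where
  "covers_permutation N S \<longleftrightarrow>
     card S = CARD('n) \<and>
     (\<exists>\<sigma>. bij_betw \<sigma> (UNIV :: 'n set) S \<and>
        (\<forall>i. \<forall>c\<in>S. N$i$c \<ge> (if c = \<sigma> i then 1 else 0)))"

definition dominance :: "real^'n^'n \<Rightarrow> real^'n \<Rightarrow> bool" where
  "dominance M q \<longleftrightarrow>
     (let N = normalized_matrix M q in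
       (\<exists>S. covers_permutation N S) \<and>
       (\<forall>S. covers_permutation N S \<longrightarrow> (\<forall>i. (\<Sum>c\<in>S. N$i$c) < 2)))"

text \<open>A run of the Lemke--Howson algorithm for a notion of basis isB and missing label jstar:
  Bs is the sequence of bases, Gs!t is the element entering at step t.  Iterations = length Bs - 1.\<close>
definition LH_run :: "(('n + 'n) set \<Rightarrow> bool) \<Rightarrow> 'n \<Rightarrow> ('n + 'n) set list \<Rightarrow> ('n + 'n) list \<Rightarrow> bool" where
  "LH_run isB jstar Bs Gs \<longleftrightarrow>
     length Bs \<ge> 2 \<and> length Gs = length Bs - 1 \<and>
     Bs!0 = range Inl \<and> isB (Bs!0) \<and> Gs!0 = Inr jstar \<and>
     (\<forall>t < length Bs - 1.
        isB (Bs!Suc t) \<and> Bs!Suc t \<subseteq> insert (Gs!t) (Bs!t) \<and> Bs!Suc t \<noteq> Bs!t \<and>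
        (\<forall>B'. isB B' \<and> B' \<subseteq> insert (Gs!t) (Bs!t) \<and> B' \<noteq> Bs!t \<longrightarrow> B' = Bs!Suc t)) \<and>
     (\<forall>t. Suc t < length Bs - 1 \<longrightarrow>
        insert (Gs!t) (Bs!t) - Bs!Suc t = {twin (Gs!Suc t)}) \<and>
     (\<forall>t. 0 < t \<and> t < length Bs - 1 \<longrightarrow> \<not> fully_labeled (Bs!t)) \<and>
     fully_labeled (last Bs)"

definition basis_of_solution :: "real^'n^'n \<Rightarrow> real^'n \<Rightarrow> ('n + 'n) set \<Rightarrow> bool" where
  "basis_of_solution M q B \<longleftrightarrow>
     classical_basis (NECP_matrix M) q B \<and>
     (\<exists>w z. NECP_solution M q w z \<and>
        (\<forall>i. w$i \<noteq> 0 \<longrightarrow> Inl i \<in> B) \<and> (\<forall>j. z$j \<noteq> 0 \<longrightarrow> Inr j \<in> B))"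

end

theory Submission
  imports Defs
begin

text \<open>Under dominance every column c of the normalized matrix N has exactly one entry 1, in row
  peak c, and if peak is injective on a column set J then in each row i the entries of J off
  their peak sum to less than 1. Hence a column set B is a classical basis iff peak maps B
  bijectively onto the rows: the normalized basis matrix is then strictly diagonally dominant, so
  it is nonsingular with a nonnegative solution, while conversely the support of a nonnegative
  solution has to meet every label. As peak c is also the row minimizing q^+_i - A_ic, the tropical
  bases are the same sets. So both runs pivot through the same sets, and the pivots depend only on
  the labelling peak: starting from jstar the path follows the orbit of j \<mapsto> peak (Inr j) until it
  closes up, and then retraces that orbit, which takes at most 2n - 1 pivots. The last basis is
  fully labeled and contains a red column, hence it is the support of a solution.\<close>

section \<open>Transversals of a column labelling\<close>

lemma twin_twin [simp]: "twin (twin c) = c"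
  by (cases c) auto

definition pivots_to ::
    "(('n + 'n) set \<Rightarrow> bool) \<Rightarrow> ('n + 'n) set \<Rightarrow> 'n + 'n \<Rightarrow> ('n + 'n) set \<Rightarrow> bool" where
  "pivots_to isB B \<gamma> B' \<longleftrightarrow> isB B' \<and> B' \<subseteq> insert \<gamma> B \<and> B' \<noteq> B \<and>
     (\<forall>B''. isB B'' \<and> B'' \<subseteq> insert \<gamma> B \<and> B'' \<noteq> B \<longrightarrow> B'' = B')"

locale column_labelling =
  fixes r :: "'n::finite + 'n \<Rightarrow> 'n"
  assumes r_Inl [simp]: "r (Inl j) = j"
begin

definition transversal :: "('n + 'n) set \<Rightarrow> bool" where
  "transversal B \<longleftrightarrow> bij_betw r B UNIV"

lemma transversal_finite: "transversal B \<Longrightarrow> finite B"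
  unfolding transversal_def using bij_betw_finite by fastforce

lemma transversal_card: "transversal B \<Longrightarrow> card B = CARD('n)"
  unfolding transversal_def by (simp add: bij_betw_same_card)

lemma transversal_inj_on: "transversal B \<Longrightarrow> inj_on r B"
  unfolding transversal_def bij_betw_def by blast

lemma transversal_extend:
  assumes "inj_on r J"
  shows "transversal (J \<union> Inl ` (- r ` J))"
proof -
  have img: "r ` Inl ` (- r ` J) = - r ` J"
    by (simp add: image_image)
  have "inj_on r (Inl ` (- r ` J))"
    by (rule inj_onI) auto
  then have "inj_on r (J \<union> Inl ` (- r ` J))"
    using assms img by (auto simp: inj_on_Un)
  moreover have "r ` (J \<union> Inl ` (- r ` J)) = UNIV"
    unfolding image_Un img by blast
  ultimately show ?thesis
    unfolding transversal_def bij_betw_def ..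
qed

lemma transversal_range_Inl: "transversal (range Inl)"
  using transversal_extend[of "{}"] by simp

definition pivot :: "('n + 'n) set \<Rightarrow> 'n + 'n \<Rightarrow> 'n + 'n \<Rightarrow> ('n + 'n) set \<Rightarrow> bool" where
  "pivot B \<gamma> c B' \<longleftrightarrow> \<gamma> \<notin> B \<and> c \<in> B \<and> r c = r \<gamma> \<and> B' = insert \<gamma> B - {c}"

lemma transversal_pivot:
  assumes "transversal B" "pivot B \<gamma> c B'"
  shows "transversal B'"
proof -
  have B': "B' = insert \<gamma> (B - {c})" and "\<gamma> \<notin> B" "c \<in> B" "r c = r \<gamma>"
    using assms(2) unfolding pivot_def by auto
  have inj: "inj_on r B" and onto: "r ` B = UNIV"
    using assms(1) unfolding transversal_def bij_betw_def by auto
  have "r ` (B - {c}) = - {r \<gamma>}"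
    using inj_on_image_set_diff[OF inj, of B "{c}"] onto \<open>c \<in> B\<close> \<open>r c = r \<gamma>\<close>
    by (simp add: Compl_eq_Diff_UNIV)
  then show ?thesis
    unfolding transversal_def bij_betw_def B'
    using inj_on_subset[OF inj, of "B - {c}"] \<open>\<gamma> \<notin> B\<close> by auto
qed

lemma pivot_unique:
  assumes B: "transversal B" and piv: "pivot B \<gamma> c B''"
    and B': "transversal B'" "B' \<subseteq> insert \<gamma> B" "B' \<noteq> B"
  shows "B' = B''"
proof -
  have "\<gamma> \<notin> B" "c \<in> B" "r c = r \<gamma>" and B'': "B'' = insert \<gamma> B - {c}"
    using piv unfolding pivot_def by auto
  have fin: "finite B" and card: "card B' = card B"
    using B B' by (simp_all add: transversal_finite transversal_card)
  have "\<gamma> \<in> B'"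
  proof (rule ccontr)
    assume "\<gamma> \<notin> B'"
    then have "B' \<subseteq> B" using B' by auto
    then show False using card_subset_eq[OF fin] card B' by simp
  qed
  moreover have "c \<noteq> \<gamma>" using \<open>\<gamma> \<notin> B\<close> \<open>c \<in> B\<close> by auto
  ultimately have "c \<notin> B'"
    using \<open>r c = r \<gamma>\<close> transversal_inj_on[OF B'(1)] by (auto simp: inj_on_def)
  then have "B' \<subseteq> B''" using B' B'' by auto
  moreover have "card B'' = card B" using B'' fin \<open>\<gamma> \<notin> B\<close> \<open>c \<in> B\<close> by simp
  ultimately show ?thesis using card_subset_eq[of B'' B'] fin card B'' by simp
qed

lemma pivots_to_transversal:
  assumes "transversal B" "pivot B \<gamma> c B'"
  shows "pivots_to transversal B \<gamma> B'"
proof -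
  have "\<gamma> \<in> B' - B" "B' \<subseteq> insert \<gamma> B"
    using assms(2) unfolding pivot_def by auto
  then show ?thesis
    unfolding pivots_to_def using transversal_pivot[OF assms] pivot_unique[OF assms] by blast
qed

lemma LH_run_of_pivots:
  fixes B :: "nat \<Rightarrow> ('n + 'n) set" and G :: "nat \<Rightarrow> 'n + 'n" and L :: nat
  assumes "0 < L" and B0: "B 0 = range Inl" and "G 0 = Inr jstar"
    and step: "\<And>t. t < L \<Longrightarrow>
      \<exists>c. pivot (B t) (G t) c (B (Suc t)) \<and> (Suc t < L \<longrightarrow> G (Suc t) = twin c)"
    and "\<And>t. 0 < t \<Longrightarrow> t < L \<Longrightarrow> \<not> fully_labeled (B t)"
    and "fully_labeled (B L)"
  shows "LH_run transversal jstar (map B [0..<Suc L]) (map G [0..<L])"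
proof -
  have transversal_B: "transversal (B t)" if "t \<le> L" for t
    using that
  proof (induction t)
    case 0
    then show ?case using B0 transversal_range_Inl by simp
  next
    case (Suc t)
    then show ?case using step[of t] transversal_pivot by auto
  qed
  have "pivots_to transversal (B t) (G t) (B (Suc t))" if "t < L" for t
    using step[OF that] transversal_B that by (auto intro: pivots_to_transversal)
  moreover have "insert (G t) (B t) - B (Suc t) = {twin (G (Suc t))}" if "Suc t < L" for t
  proof -
    from \<open>Suc t < L\<close> obtain c where "pivot (B t) (G t) c (B (Suc t))" "G (Suc t) = twin c"
      using step[of t] by auto
    then show ?thesis
      unfolding pivot_def by auto
  qed
  moreover have "last (map B [0..<Suc L]) = B L"
    by (simp del: upt_Suc add: last_map)
  ultimately show ?thesis
    unfolding LH_run_def pivots_to_def[symmetric]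
    using assms transversal_range_Inl by (simp del: upt_Suc add: nth_append)
qed

end

section \<open>The Lemke--Howson path\<close>

locale LH_path = column_labelling r for r :: "'n::finite + 'n \<Rightarrow> 'n" +
  fixes jstar :: 'n
begin

definition orbit :: "nat \<Rightarrow> 'n" where
  "orbit s = ((\<lambda>j. r (Inr j)) ^^ s) jstar"

lemma orbit_0 [simp]: "orbit 0 = jstar"
  by (simp add: orbit_def)

lemma orbit_Suc: "orbit (Suc s) = r (Inr (orbit s))"
  by (simp add: orbit_def)

definition orbit_end :: nat where
  "orbit_end = (LEAST s. orbit (Suc s) \<in> orbit ` {..s})"

definition cycle_start :: nat where
  "cycle_start = (THE i. i \<le> orbit_end \<and> orbit i = orbit (Suc orbit_end))"

lemma orbit_repeats: "\<exists>s < CARD('n). orbit (Suc s) \<in> orbit ` {..s}"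
proof -
  have "\<not> inj_on orbit {..CARD('n)}"
    using card_inj_on_le[of orbit "{..CARD('n)}" UNIV] by auto
  then obtain x y where "x < y" "y \<le> CARD('n)" "orbit x = orbit y"
    unfolding inj_on_def by (metis atMost_iff linorder_neqE_nat)
  moreover from \<open>x < y\<close> obtain s where "y = Suc s"
    using less_imp_Suc_add by blast
  ultimately have "s < CARD('n)" "orbit (Suc s) \<in> orbit ` {..s}"
    by (auto simp del: orbit_Suc intro!: image_eqI[of _ orbit x] simp: less_Suc_eq_le)
  then show ?thesis
    by blast
qed

lemma orbit_end_less_card: "orbit_end < CARD('n)"
  using orbit_repeats unfolding orbit_end_def by (meson Least_le le_less_trans)

lemma orbit_Suc_orbit_end: "orbit (Suc orbit_end) \<in> orbit ` {..orbit_end}"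
  using orbit_repeats unfolding orbit_end_def by (metis (mono_tags, lifting) LeastI_ex)

lemma inj_on_orbit: "inj_on orbit {..orbit_end}"
proof -
  have "orbit x \<noteq> orbit y" if "x < y" "y \<le> orbit_end" for x y
  proof
    assume "orbit x = orbit y"
    from \<open>x < y\<close> obtain s where "y = Suc s"
      using less_imp_Suc_add by blast
    with that \<open>orbit x = orbit y\<close> have "s < orbit_end" "orbit (Suc s) \<in> orbit ` {..s}"
      by (auto simp del: orbit_Suc intro!: image_eqI[of _ orbit x] simp: less_Suc_eq_le)
    then show False
      unfolding orbit_end_def using not_less_Least by blast
  qed
  then show ?thesis
    by (metis atMost_iff inj_onI linorder_neqE_nat)
qed

lemma cycle_start_le_orbit_end: "cycle_start \<le> orbit_end"
  and orbit_cycle_start: "orbit cycle_start = orbit (Suc orbit_end)"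
proof -
  have "\<exists>!i. i \<le> orbit_end \<and> orbit i = orbit (Suc orbit_end)"
    using orbit_Suc_orbit_end inj_on_orbit by (auto simp: inj_on_def)
  then show "cycle_start \<le> orbit_end" "orbit cycle_start = orbit (Suc orbit_end)"
    unfolding cycle_start_def by (metis (mono_tags, lifting) theI')+
qed

lemma orbit_notin_orbit_image:
  "x \<le> orbit_end \<Longrightarrow> S \<subseteq> {..orbit_end} \<Longrightarrow> x \<notin> S \<Longrightarrow> orbit x \<notin> orbit ` S"
  using inj_on_image_mem_iff[OF inj_on_orbit] by simp

definition cycle :: "'n set" where
  "cycle = orbit ` {cycle_start..orbit_end}"

text \<open>The path visits orbit_basis t {} for t \<le> orbit_end, and then orbit_basis d cycle for
  decreasing d: the red columns of the orbit entered on the way out are swapped back for blue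
  ones, except on the cycle. If the orbit returns to jstar, the closing pivot leads directly to
  orbit_basis 0 cycle.\<close>

definition orbit_basis :: "nat \<Rightarrow> 'n set \<Rightarrow> ('n + 'n) set" where
  "orbit_basis t C = Inl ` (- (orbit ` {1..t} \<union> C)) \<union> Inr ` (orbit ` {..<t} \<union> C)"

lemma orbit_basis_pivot:
  assumes "Suc t \<le> orbit_end" "orbit t \<notin> C" "orbit (Suc t) \<notin> C"
  shows "pivot (orbit_basis t C) (Inr (orbit t)) (Inl (orbit (Suc t))) (orbit_basis (Suc t) C)"
    and "pivot (orbit_basis (Suc t) C) (Inl (orbit (Suc t))) (Inr (orbit t)) (orbit_basis t C)"
proof -
  have "orbit t \<notin> orbit ` {..<t}" "orbit (Suc t) \<notin> orbit ` {1..t}"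
    using assms(1) by (intro orbit_notin_orbit_image; auto)+
  moreover have "orbit ` {1..Suc t} = insert (orbit (Suc t)) (orbit ` {1..t})"
    "orbit ` {..<Suc t} = insert (orbit t) (orbit ` {..<t})"
    by (auto simp: atLeastAtMostSuc_conv lessThan_Suc)
  ultimately show
    "pivot (orbit_basis t C) (Inr (orbit t)) (Inl (orbit (Suc t))) (orbit_basis (Suc t) C)"
    "pivot (orbit_basis (Suc t) C) (Inl (orbit (Suc t))) (Inr (orbit t)) (orbit_basis t C)"
    unfolding pivot_def orbit_basis_def using assms(2,3) by (auto simp: orbit_Suc)
qed

lemma closing_pivot_jstar:
  assumes "cycle_start = 0"
  shows "pivot (orbit_basis orbit_end {}) (Inr (orbit orbit_end)) (Inl jstar) (orbit_basis 0 cycle)"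
proof -
  have new: "orbit 0 \<notin> orbit ` {1..orbit_end}" "orbit orbit_end \<notin> orbit ` {..<orbit_end}"
    by (intro orbit_notin_orbit_image; auto)+
  have "{..orbit_end} = insert 0 {1..orbit_end}" "{..orbit_end} = insert orbit_end {..<orbit_end}"
    by auto
  then have cycle: "cycle = insert jstar (orbit ` {1..orbit_end})"
    "cycle = insert (orbit orbit_end) (orbit ` {..<orbit_end})"
    unfolding cycle_def assms atLeast0AtMost by (metis image_insert orbit_0)+
  have "insert (Inr (orbit orbit_end)) (orbit_basis orbit_end {}) - {Inl jstar} =
      Inl ` (- insert jstar (orbit ` {1..orbit_end})) \<union>
      Inr ` insert (orbit orbit_end) (orbit ` {..<orbit_end})"
    unfolding orbit_basis_def by auto
  also have "\<dots> = orbit_basis 0 cycle"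
    unfolding orbit_basis_def cycle(1)[symmetric] cycle(2)[symmetric] by simp
  finally show ?thesis
    unfolding pivot_def using new orbit_cycle_start assms
    by (auto simp: orbit_basis_def orbit_Suc)
qed

lemma closing_pivot:
  assumes "0 < cycle_start"
  shows "pivot (orbit_basis orbit_end {}) (Inr (orbit orbit_end)) (Inr (orbit (cycle_start - 1)))
    (orbit_basis (cycle_start - 1) cycle)"
proof -
  let ?l = "cycle_start - 1"
  have l: "?l < orbit_end" "Suc ?l = cycle_start"
    using assms cycle_start_le_orbit_end by auto
  have "{1..?l} \<union> {cycle_start..orbit_end} = {1..orbit_end}"
    "{..<?l} \<union> {cycle_start..orbit_end} = {..orbit_end} - {?l}"
    using l by auto
  then have "orbit ` {1..?l} \<union> cycle = orbit ` {1..orbit_end}"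
    "orbit ` {..<?l} \<union> cycle = orbit ` {..orbit_end} - {orbit ?l}"
    unfolding cycle_def image_Un[symmetric]
    using inj_on_image_set_diff[OF inj_on_orbit, of "{..orbit_end}" "{?l}"] l by auto
  moreover have "orbit ` {..orbit_end} = insert (orbit orbit_end) (orbit ` {..<orbit_end})"
    by (simp add: lessThan_Suc_atMost[symmetric] lessThan_Suc)
  moreover have "orbit orbit_end \<notin> orbit ` {..<orbit_end}"
    by (intro orbit_notin_orbit_image) auto
  moreover have "r (Inr (orbit ?l)) = r (Inr (orbit orbit_end))"
    using orbit_cycle_start l(2) by (metis orbit_Suc)
  ultimately show ?thesis
    unfolding pivot_def orbit_basis_def using l by auto
qed

lemma orbit_notin_cycle: "d < cycle_start \<Longrightarrow> orbit d \<notin> cycle"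
  unfolding cycle_def using cycle_start_le_orbit_end by (intro orbit_notin_orbit_image) auto

lemma orbit_basis_0_fully_labeled: "fully_labeled (orbit_basis 0 C)"
  unfolding fully_labeled_def orbit_basis_def by auto

lemma orbit_basis_not_fully_labeled:
  assumes "0 < t" "t \<le> orbit_end" "orbit t \<notin> C"
  shows "\<not> fully_labeled (orbit_basis t C)"
proof -
  have "orbit t \<notin> orbit ` {..<t}"
    using assms(2) by (intro orbit_notin_orbit_image) auto
  moreover have "orbit t \<in> orbit ` {1..t}"
    using assms(1) by auto
  ultimately show ?thesis
    unfolding fully_labeled_def orbit_basis_def using assms(3) by auto
qed

definition path_length :: nat where
  "path_length = orbit_end + max 1 cycle_start"

definition path_basis :: "nat \<Rightarrow> ('n + 'n) set" where
  "path_basis t =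
    (if t \<le> orbit_end then orbit_basis t {} else orbit_basis (path_length - t) cycle)"

definition entering :: "nat \<Rightarrow> 'n + 'n" where
  "entering t = (if t \<le> orbit_end then Inr (orbit t) else Inl (orbit (path_length - t)))"

lemma backward_index:
  assumes "orbit_end < t" "t < path_length"
  shows "path_length - t < cycle_start"
  using assms unfolding path_length_def by auto

lemma path_step:
  assumes "t < path_length"
  shows "\<exists>c. pivot (path_basis t) (entering t) c (path_basis (Suc t)) \<and>
    (Suc t < path_length \<longrightarrow> entering (Suc t) = twin c)"
proof -
  consider (forward) "t < orbit_end"
    | (closing_jstar) "t = orbit_end" "cycle_start = 0"
    | (closing) "t = orbit_end" "0 < cycle_start"
    | (backward) "orbit_end < t"
    by linarith
  then show ?thesis
  proof cases
    case forward
    then show ?thesis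
      using orbit_basis_pivot(1)[of t "{}"]
      by (intro exI[of _ "Inl (orbit (Suc t))"]) (auto simp: path_basis_def entering_def)
  next
    case closing_jstar
    then show ?thesis
      using closing_pivot_jstar
      by (intro exI[of _ "Inl jstar"]) (simp add: path_basis_def entering_def path_length_def)
  next
    case closing
    then show ?thesis
      using closing_pivot
      by (intro exI[of _ "Inr (orbit (cycle_start - 1))"])
        (auto simp: path_basis_def entering_def path_length_def)
  next
    case backward
    define d where "d = path_length - Suc t"
    have d: "path_length - t = Suc d" "path_length - Suc t = d" "Suc d < cycle_start"
      using backward_index[OF backward assms] assms unfolding d_def by auto
    then have "pivot (orbit_basis (Suc d) cycle) (Inl (orbit (Suc d))) (Inr (orbit d))
        (orbit_basis d cycle)"
      using cycle_start_le_orbit_end orbit_notin_cycle by (intro orbit_basis_pivot(2)) auto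
    then show ?thesis
      using backward d
      by (intro exI[of _ "Inr (orbit d)"]) (auto simp: path_basis_def entering_def)
  qed
qed

lemma path_not_fully_labeled:
  assumes "0 < t" "t < path_length"
  shows "\<not> fully_labeled (path_basis t)"
proof (cases "t \<le> orbit_end")
  case True
  then show ?thesis
    using assms orbit_basis_not_fully_labeled[of t "{}"] by (simp add: path_basis_def)
next
  case False
  then have "0 < path_length - t" "path_length - t < cycle_start"
    using assms backward_index by auto
  then show ?thesis
    using False cycle_start_le_orbit_end orbit_notin_cycle orbit_basis_not_fully_labeled
    by (simp add: path_basis_def)
qed

lemma path_end: "path_basis path_length = orbit_basis 0 cycle"
  by (simp add: path_basis_def path_length_def)

lemma LH_run_path:
  "LH_run transversal jstar (map path_basis [0..<Suc path_length]) (map entering [0..<path_length])"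
proof (rule LH_run_of_pivots)
  show "0 < path_length"
    by (simp add: path_length_def max_def)
  show "path_basis 0 = range Inl"
    by (simp add: path_basis_def orbit_basis_def)
  show "fully_labeled (path_basis path_length)"
    unfolding path_end by (rule orbit_basis_0_fully_labeled)
qed (simp_all add: path_step path_not_fully_labeled entering_def[of 0])

lemma path_length_le: "path_length \<le> 2 * CARD('n) - 1"
  using orbit_end_less_card cycle_start_le_orbit_end unfolding path_length_def by auto

lemma Inr_in_path_end: "Inr (orbit orbit_end) \<in> path_basis path_length"
  using cycle_start_le_orbit_end unfolding path_end orbit_basis_def cycle_def by auto

end

lemma (in column_labelling) LH_run_exists:
  "\<exists>Bs Gs. LH_run transversal jstar Bs Gs \<and> length Bs - 1 \<le> 2 * CARD('n) - 1 \<and>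
    (\<exists>j. Inr j \<in> last Bs)"
proof -
  interpret LH_path r jstar
    by unfold_locales simp
  have "last (map path_basis [0..<Suc path_length]) = path_basis path_length"
    by (simp del: upt_Suc add: last_map)
  then show ?thesis
    using LH_run_path path_length_le Inr_in_path_end by fastforce
qed

section \<open>Consequences of dominance\<close>

lemma sum_le_sum_fibre_representatives:
  fixes f :: "'a \<Rightarrow> 'b" and w g :: "'a \<Rightarrow> real"
  assumes "finite P" and w: "\<And>c. c \<in> P \<Longrightarrow> 0 \<le> w c" and g: "\<And>c. c \<in> P \<Longrightarrow> 0 \<le> g c"
    and fibre: "\<And>k. (\<Sum>c\<in>{c\<in>P. f c = k}. w c) \<le> 1"
  obtains J where "J \<subseteq> P" "inj_on f J" "(\<Sum>c\<in>P. w c * g c) \<le> (\<Sum>c\<in>J. g c)"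
proof -
  have "\<exists>c\<in>{c\<in>P. f c = k}. \<forall>c'\<in>{c\<in>P. f c = k}. g c' \<le> g c" if "k \<in> f ` P" for k
    using that \<open>finite P\<close> ex_is_arg_min_if_finite[of "{c\<in>P. f c = k}" "\<lambda>c. - g c"]
    unfolding is_arg_min_def by force
  then obtain h where h: "\<And>k. k \<in> f ` P \<Longrightarrow> h k \<in> P \<and> f (h k) = k \<and>
      (\<forall>c\<in>P. f c = k \<longrightarrow> g c \<le> g (h k))"
    by (metis (mono_tags, lifting) mem_Collect_eq)
  have inj: "inj_on h (f ` P)"
    by (metis h inj_on_inverseI)
  have "(\<Sum>c\<in>P. w c * g c) = (\<Sum>k\<in>f ` P. \<Sum>c\<in>{c\<in>P. f c = k}. w c * g c)"
    by (rule sum.image_gen[OF \<open>finite P\<close>])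
  also have "\<dots> \<le> (\<Sum>k\<in>f ` P. \<Sum>c\<in>{c\<in>P. f c = k}. w c * g (h k))"
    by (intro sum_mono mult_left_mono) (use h w in auto)
  also have "\<dots> = (\<Sum>k\<in>f ` P. g (h k) * (\<Sum>c\<in>{c\<in>P. f c = k}. w c))"
    by (simp add: sum_distrib_left mult.commute)
  also have "\<dots> \<le> (\<Sum>k\<in>f ` P. g (h k))"
    by (intro sum_mono) (use h g fibre in \<open>auto intro: mult_left_le\<close>)
  also have "\<dots> = (\<Sum>c\<in>h ` f ` P. g c)"
    by (simp add: sum.reindex[OF inj])
  finally show ?thesis
    using h by (intro that[of "h ` f ` P"]) (auto simp: inj_on_def)
qed

lemma weighted_sum_le_bound:
  fixes y w :: "'a \<Rightarrow> real"
  assumes "\<And>c. c \<in> S \<Longrightarrow> 0 \<le> w c" "\<And>c. c \<in> S \<Longrightarrow> y c \<le> X"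
  shows "(\<Sum>c\<in>S. y c * w c) \<le> X * (\<Sum>c\<in>S. w c)"
  unfolding sum_distrib_left by (intro sum_mono mult_right_mono) (simp_all add: assms)

lemma weighted_sum_ge_bound:
  fixes y w :: "'a \<Rightarrow> real"
  assumes "\<And>c. c \<in> S \<Longrightarrow> 0 \<le> w c" "\<And>c. c \<in> S \<Longrightarrow> X \<le> y c"
  shows "X * (\<Sum>c\<in>S. w c) \<le> (\<Sum>c\<in>S. y c * w c)"
  unfolding sum_distrib_left by (intro sum_mono mult_right_mono) (simp_all add: assms)

lemma NECP_matrix_Inl: "NECP_matrix M $ i $ Inl j = (if i = j then 1 else 0)"
  by (simp add: NECP_matrix_def)

lemma NECP_matrix_Inr: "NECP_matrix M $ i $ Inr j = - M $ i $ j"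
  by (simp add: NECP_matrix_def)

lemma scaled_matrix_le_col_max: "scaled_matrix M q $ i $ c \<le> col_max M q c"
  unfolding col_max_def by (rule Max_ge) auto

lemma col_max_attained: "\<exists>i. scaled_matrix M q $ i $ c = col_max M q c"
proof -
  have "col_max M q c \<in> range (\<lambda>i. scaled_matrix M q $ i $ c)"
    unfolding col_max_def by (rule Max_in) auto
  then show ?thesis
    by auto
qed

lemma trop_log_le_trop_log_iff:
  assumes "0 < y"
  shows "trop_log x \<le> trop_log y \<longleftrightarrow> x \<le> y"
  using assms by (auto simp: trop_log_def)

locale dominant_NECP =
  fixes M :: "real^'n^'n" and q :: "real^'n"
  assumes NECP_instance: "NECP_instance M q" and dominance: "dominance M q"
begin

abbreviation N :: "'n \<Rightarrow> 'n + 'n \<Rightarrow> real" where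
  "N i c \<equiv> normalized_matrix M q $ i $ c"

lemma q_pos: "0 < q $ i"
  using NECP_instance by (simp add: NECP_instance_def)

lemma NECP_matrix_nonneg: "0 \<le> NECP_matrix M $ i $ c"
  using NECP_instance by (cases c) (auto simp: NECP_instance_def NECP_matrix_Inl NECP_matrix_Inr)

lemma scaled_matrix_nonneg: "0 \<le> scaled_matrix M q $ i $ c"
  using NECP_matrix_nonneg[of i c] q_pos[of i] by (simp add: scaled_matrix_def)

lemma col_max_pos: "0 < col_max M q c"
proof -
  obtain i where "0 < NECP_matrix M $ i $ c"
    using NECP_instance unfolding NECP_instance_def
    by (cases c) (force simp: NECP_matrix_Inl NECP_matrix_Inr)+
  then have "0 < scaled_matrix M q $ i $ c"
    using q_pos by (simp add: scaled_matrix_def)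
  then show ?thesis
    using scaled_matrix_le_col_max by (rule less_le_trans)
qed

lemma normalized_nonneg: "0 \<le> N i c"
  using scaled_matrix_nonneg[of i c] col_max_pos[of c] by (simp add: normalized_matrix_def)

lemma normalized_eq_1_iff: "N i c = 1 \<longleftrightarrow> scaled_matrix M q $ i $ c = col_max M q c"
  using col_max_pos[of c] by (auto simp: normalized_matrix_def)

lemma normalized_Inl_eq_1_iff: "N i (Inl j) = 1 \<longleftrightarrow> i = j"
proof -
  have scaled: "scaled_matrix M q $ k $ Inl j = (if k = j then 1 / q $ j else 0)" for k
    by (simp add: scaled_matrix_def NECP_matrix_Inl)
  obtain k where "scaled_matrix M q $ k $ Inl j = col_max M q (Inl j)"
    using col_max_attained by blast
  with col_max_pos[of "Inl j"] have "col_max M q (Inl j) = 1 / q $ j"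
    by (metis scaled order.irrefl)
  moreover have "0 < 1 / q $ j"
    using q_pos by simp
  ultimately show ?thesis
    unfolding normalized_eq_1_iff scaled by simp
qed

lemma dominance_row_sum:
  assumes "bij_betw \<sigma> (UNIV :: 'n set) S" "\<And>k. N k (\<sigma> k) = 1"
  shows "(\<Sum>c\<in>S. N i c) < 2"
proof -
  have "covers_permutation (normalized_matrix M q) S"
    unfolding covers_permutation_def
    using assms bij_betw_same_card[OF assms(1)] normalized_nonneg by auto
  then show ?thesis
    using dominance unfolding dominance_def Let_def by blast
qed

lemma normalized_eq_1_unique:
  assumes "N i c = 1" "N i' c = 1"
  shows "i = i'"
proof (rule ccontr)
  assume "i \<noteq> i'"
  obtain j where c: "c = Inr j"
    using assms \<open>i \<noteq> i'\<close> normalized_Inl_eq_1_iff by (cases c) auto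
  define \<sigma> where "\<sigma> k = (if k = i then c else Inl k)" for k
  have "bij_betw \<sigma> UNIV (range \<sigma>)"
    unfolding \<sigma>_def bij_betw_def inj_def c by auto
  moreover have "N k (\<sigma> k) = 1" for k
    using assms(1) normalized_Inl_eq_1_iff by (simp add: \<sigma>_def)
  ultimately have "(\<Sum>c\<in>range \<sigma>. N i' c) < 2"
    by (rule dominance_row_sum)
  moreover have "{Inl i', c} \<subseteq> range \<sigma>"
    using \<open>i \<noteq> i'\<close> by (auto simp: \<sigma>_def c intro: range_eqI[of _ _ i'] range_eqI[of _ _ i])
  then have "(\<Sum>c\<in>{Inl i', c}. N i' c) \<le> (\<Sum>c\<in>range \<sigma>. N i' c)"
    by (intro sum_mono2) (auto simp: normalized_nonneg)
  moreover have "(\<Sum>c\<in>{Inl i', c}. N i' c) = 2"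
    using assms(2) normalized_Inl_eq_1_iff c by simp
  ultimately show False
    by simp
qed

definition peak :: "'n + 'n \<Rightarrow> 'n" where
  "peak c = (THE i. N i c = 1)"

lemma normalized_eq_1_iff_peak: "N i c = 1 \<longleftrightarrow> i = peak c"
proof -
  obtain i0 where i0: "N i0 c = 1"
    using col_max_attained normalized_eq_1_iff by blast
  have ex1: "\<exists>!i. N i c = 1"
  proof (rule ex1I)
    show "N i0 c = 1" by (fact i0)
  next
    fix i assume "N i c = 1"
    then show "i = i0" using i0 by (rule normalized_eq_1_unique)
  qed
  show ?thesis
  proof
    assume "N i c = 1"
    then show "i = peak c"
      unfolding peak_def by (rule the1_equality[OF ex1, symmetric])
  next
    assume "i = peak c"
    then show "N i c = 1"
      unfolding peak_def using theI'[OF ex1] by simp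
  qed
qed

lemma normalized_peak: "N (peak c) c = 1"
  by (simp add: normalized_eq_1_iff_peak)

lemma peak_Inl: "peak (Inl j) = j"
  using normalized_Inl_eq_1_iff[of j j] unfolding normalized_eq_1_iff_peak by simp

sublocale column_labelling peak
  by unfold_locales (rule peak_Inl)

lemma transversal_row_sum_lt_2:
  assumes "transversal S"
  shows "(\<Sum>c\<in>S. N i c) < 2"
proof (rule dominance_row_sum)
  have bij: "bij_betw peak S UNIV"
    using assms unfolding transversal_def .
  then show "bij_betw (inv_into S peak) UNIV S"
    by (rule bij_betw_inv_into)
  show "N k (inv_into S peak k) = 1" for k
    using bij by (simp add: normalized_eq_1_iff_peak f_inv_into_f bij_betw_def)
qed

lemma transversal_row_split:
  assumes "transversal B" "c0 \<in> B"
  shows "(\<Sum>c\<in>B. y c * N (peak c0) c) = y c0 + (\<Sum>c\<in>{c\<in>B. peak c \<noteq> peak c0}. y c * N (peak c0) c)"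
proof -
  have "B - {c0} = {c\<in>B. peak c \<noteq> peak c0}"
    using assms transversal_inj_on[OF assms(1)] by (auto simp: inj_on_def)
  then show ?thesis
    using assms transversal_finite normalized_peak by (simp add: sum.remove)
qed

lemma off_peak_row_sum_lt_1:
  assumes "inj_on peak J"
  shows "(\<Sum>c\<in>{c\<in>J. peak c \<noteq> i}. N i c) < 1"
proof -
  let ?S = "J \<union> Inl ` (- peak ` J)"
  have S: "transversal ?S"
    using assms by (rule transversal_extend)
  then obtain c0 where c0: "c0 \<in> ?S" "peak c0 = i"
    unfolding transversal_def bij_betw_def by (metis UNIV_I imageE)
  have "(\<Sum>c\<in>{c\<in>J. peak c \<noteq> i}. N i c) \<le> (\<Sum>c\<in>{c\<in>?S. peak c \<noteq> i}. N i c)"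
    using transversal_finite[OF S] by (intro sum_mono2) (auto simp: normalized_nonneg)
  also have "\<dots> = (\<Sum>c\<in>?S. N i c) - 1"
    using transversal_row_split[OF S c0(1), of "\<lambda>_. 1"] c0(2) by simp
  also have "\<dots> < 1"
    using transversal_row_sum_lt_2[OF S] by simp
  finally show ?thesis .
qed

lemma transversal_normalized_independent:
  assumes B: "transversal B" and eq: "\<And>i. (\<Sum>c\<in>B. v c * N i c) = 0" and "c \<in> B"
  shows "v c = 0"
proof -
  have fin: "finite B"
    using B by (rule transversal_finite)
  define X where "X = Max ((\<lambda>c. \<bar>v c\<bar>) ` B)"
  have le: "\<bar>v c'\<bar> \<le> X" if "c' \<in> B" for c'
    unfolding X_def using fin that by (intro Max_ge) auto
  have "X \<in> (\<lambda>c. \<bar>v c\<bar>) ` B"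
    unfolding X_def using fin \<open>c \<in> B\<close> by (intro Max_in) auto
  then obtain c0 where c0: "c0 \<in> B" "\<bar>v c0\<bar> = X"
    by auto
  let ?off = "{c\<in>B. peak c \<noteq> peak c0}"
  have "X = \<bar>\<Sum>c\<in>?off. v c * N (peak c0) c\<bar>"
    using transversal_row_split[OF B c0(1), of v] eq[of "peak c0"] c0(2) by simp
  also have "\<dots> \<le> (\<Sum>c\<in>?off. \<bar>v c\<bar> * N (peak c0) c)"
    using sum_abs[of "\<lambda>c. v c * N (peak c0) c" ?off] by (simp add: abs_mult normalized_nonneg)
  also have "\<dots> \<le> X * (\<Sum>c\<in>?off. N (peak c0) c)"
    using le by (intro weighted_sum_le_bound) (auto simp: normalized_nonneg)
  finally have "X \<le> X * (\<Sum>c\<in>?off. N (peak c0) c)" .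
  moreover have "(\<Sum>c\<in>?off. N (peak c0) c) < 1"
    using B transversal_inj_on off_peak_row_sum_lt_1 by blast
  moreover have "0 \<le> X"
    using c0 by auto
  ultimately have "X = 0"
    using mult_strict_left_mono[of "\<Sum>c\<in>?off. N (peak c0) c" 1 X] by fastforce
  then show ?thesis
    using le[OF \<open>c \<in> B\<close>] by simp
qed

lemma transversal_normalized_solution_nonneg:
  assumes B: "transversal B" and eq: "\<And>i. (\<Sum>c\<in>B. y c * N i c) = 1" and "c \<in> B"
  shows "0 \<le> y c"
proof -
  have fin: "finite B"
    using B by (rule transversal_finite)
  define \<mu> where "\<mu> = Min (y ` B)"
  define X where "X = Max (y ` B)"
  have bounds: "\<mu> \<le> y c'" "y c' \<le> X" if "c' \<in> B" for c'
    unfolding \<mu>_def X_def using fin that by (intro Min_le Max_ge; auto)+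
  have "\<mu> \<in> y ` B" "X \<in> y ` B"
    unfolding \<mu>_def X_def using fin \<open>c \<in> B\<close> by (intro Min_in Max_in; auto)+
  then obtain c0 c1 where c0: "c0 \<in> B" "y c0 = \<mu>" and c1: "c1 \<in> B" "y c1 = X"
    by auto
  define e0 where "e0 = (\<Sum>c\<in>{c\<in>B. peak c \<noteq> peak c0}. N (peak c0) c)"
  define e1 where "e1 = (\<Sum>c\<in>{c\<in>B. peak c \<noteq> peak c1}. N (peak c1) c)"
  have e: "0 \<le> e0" "e0 < 1" "0 \<le> e1" "e1 < 1"
    unfolding e0_def e1_def using off_peak_row_sum_lt_1 transversal_inj_on[OF B]
    by (auto intro: sum_nonneg normalized_nonneg)
  have "1 - X * e0 \<le> \<mu>"
    using transversal_row_split[OF B c0(1), of y] eq[of "peak c0"] c0(2)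
      weighted_sum_le_bound[of "{c\<in>B. peak c \<noteq> peak c0}" "N (peak c0)" y X]
    by (simp add: e0_def bounds normalized_nonneg)
  moreover have "X \<le> 1 - \<mu> * e1"
    using transversal_row_split[OF B c1(1), of y] eq[of "peak c1"] c1(2)
      weighted_sum_ge_bound[of "{c\<in>B. peak c \<noteq> peak c1}" "N (peak c1)" \<mu> y]
    by (simp add: e1_def bounds normalized_nonneg)
  moreover have "X * e0 \<le> max X 0"
    using e mult_left_le[of e0 X] by (cases "0 \<le> X") (auto simp: mult_nonpos_nonneg)
  moreover have "\<mu> < \<mu> * e1" if "\<mu> < 0"
    using that e mult_strict_left_mono_neg[of e1 1 \<mu>] by simp
  ultimately have "0 \<le> \<mu>"
    by (smt (verit))
  then show ?thesis
    using bounds(1)[OF \<open>c \<in> B\<close>] by simp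
qed

section \<open>Classical and tropical bases\<close>

lemma nonneg_solution_imp_transversal:
  assumes card: "card B = CARD('n)" and y: "\<And>c. c \<in> B \<Longrightarrow> 0 \<le> y c"
    and eq: "\<And>i. (\<Sum>c\<in>B. y c * N i c) = 1"
  shows "transversal B"
proof -
  have fin: "finite B"
    using card by (metis card.infinite zero_less_card_finite less_irrefl)
  define P where "P = {c\<in>B. 0 < y c}"
  have "P \<subseteq> B" and finP: "finite P"
    using fin by (auto simp: P_def)
  have eqP: "(\<Sum>c\<in>P. y c * N i c) = 1" for i
    unfolding eq[of i, symmetric] P_def using fin y
    by (intro sum.mono_neutral_left) (auto simp: order_le_less)
  have fibre: "(\<Sum>c\<in>{c\<in>P. peak c = k}. y c) \<le> 1" for k
  proof -
    have "(\<Sum>c\<in>{c\<in>P. peak c = k}. y c) = (\<Sum>c\<in>{c\<in>P. peak c = k}. y c * N k c)"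
      by (intro sum.cong) (auto simp: normalized_eq_1_iff_peak)
    also have "\<dots> \<le> (\<Sum>c\<in>P. y c * N k c)"
      using finP by (intro sum_mono2) (auto simp: P_def normalized_nonneg)
    finally show ?thesis
      by (simp add: eqP)
  qed
  have onto: "peak ` P = UNIV"
  proof (rule ccontr)
    assume "peak ` P \<noteq> UNIV"
    then obtain i where i: "i \<notin> peak ` P"
      by auto
    obtain J where J: "J \<subseteq> P" "inj_on peak J" "(\<Sum>c\<in>P. y c * N i c) \<le> (\<Sum>c\<in>J. N i c)"
      using sum_le_sum_fibre_representatives[OF finP, of y "N i" peak] fibre
      by (auto simp: P_def normalized_nonneg)
    have "{c\<in>J. peak c \<noteq> i} = J"
      using J(1) i by auto
    then show False
      using off_peak_row_sum_lt_1[OF J(2), of i] J(3) eqP[of i] by simp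
  qed
  have "card (peak ` P) \<le> card P"
    using finP by (rule card_image_le)
  then have "card B \<le> card P"
    unfolding onto card by simp
  then have "P = B"
    using card_mono[OF fin \<open>P \<subseteq> B\<close>] by (intro card_subset_eq[OF fin \<open>P \<subseteq> B\<close>]) simp
  then show ?thesis
    unfolding transversal_def bij_betw_def
    using onto card fin by (simp add: eq_card_imp_inj_on)
qed

lemma column_sum_component:
  "(\<Sum>c\<in>B. x c *\<^sub>R column c (NECP_matrix M)) $ i = q $ i * (\<Sum>c\<in>B. (x c * col_max M q c) * N i c)"
proof -
  have "x c * NECP_matrix M $ i $ c = q $ i * ((x c * col_max M q c) * N i c)" for c
    using q_pos[of i] col_max_pos[of c] by (simp add: normalized_matrix_def scaled_matrix_def)
  then show ?thesis
    by (simp only: sum_component column_def vec_lambda_beta vector_scaleR_component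
        sum_distrib_left real_scaleR_def)
qed

lemma column_sum_eq_iff:
  "(\<Sum>c\<in>B. x c *\<^sub>R column c (NECP_matrix M)) = v \<longleftrightarrow>
    (\<forall>i. (\<Sum>c\<in>B. (x c * col_max M q c) * N i c) = v $ i / q $ i)"
proof -
  have "q $ i * s = v $ i \<longleftrightarrow> s = v $ i / q $ i" for s i
    using q_pos[of i] by (auto simp: field_simps)
  then show ?thesis
    unfolding vec_eq_iff column_sum_component by presburger
qed

lemma classical_basis_imp_transversal:
  assumes "classical_basis (NECP_matrix M) q B"
  shows "transversal B"
proof -
  obtain x where card: "card B = CARD('n)" and nonneg: "\<And>c. 0 \<le> x c"
    and x: "(\<Sum>c\<in>B. x c *\<^sub>R column c (NECP_matrix M)) = q"
    using assms unfolding classical_basis_def by blast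
  have "(\<Sum>c\<in>B. (x c * col_max M q c) * N i c) = 1" for i
    using x q_pos[of i] unfolding column_sum_eq_iff by simp
  then show ?thesis
    using card nonneg col_max_pos
    by (intro nonneg_solution_imp_transversal[where y = "\<lambda>c. x c * col_max M q c"])
      (auto simp: less_imp_le)
qed

lemma normalized_eq_if_column_eq:
  assumes "column c (NECP_matrix M) = column c' (NECP_matrix M)"
  shows "N i c = N i c'"
proof -
  have "NECP_matrix M $ k $ c = NECP_matrix M $ k $ c'" for k
    using assms by (simp add: column_def vec_eq_iff)
  then show ?thesis
    by (simp add: normalized_matrix_def scaled_matrix_def col_max_def)
qed

lemma transversal_inj_on_columns:
  assumes "transversal B"
  shows "inj_on (\<lambda>c. column c (NECP_matrix M)) B"
proof (rule inj_onI)
  fix c c' assume "c \<in> B" "c' \<in> B" "column c (NECP_matrix M) = column c' (NECP_matrix M)"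
  then have "peak c = peak c'"
    using normalized_eq_if_column_eq normalized_eq_1_iff_peak normalized_peak by metis
  then show "c = c'"
    using transversal_inj_on[OF assms] \<open>c \<in> B\<close> \<open>c' \<in> B\<close> by (auto dest: inj_onD)
qed

lemma transversal_columns_independent:
  assumes B: "transversal B"
  shows "independent ((\<lambda>c. column c (NECP_matrix M)) ` B)"
  unfolding independent_explicit
proof (intro conjI allI impI ballI)
  let ?col = "\<lambda>c. column c (NECP_matrix M)"
  show "finite (?col ` B)"
    using transversal_finite[OF B] by simp
  fix u v
  assume "(\<Sum>v\<in>?col ` B. u v *\<^sub>R v) = 0" and "v \<in> ?col ` B"
  then obtain c where "c \<in> B" "v = ?col c" and "(\<Sum>c\<in>B. u (?col c) *\<^sub>R ?col c) = 0"
    by (auto simp: sum.reindex[OF transversal_inj_on_columns[OF B]])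
  then have "u (?col c) * col_max M q c = 0"
    unfolding column_sum_eq_iff
    by (intro transversal_normalized_independent[OF B, where v = "\<lambda>c. u (?col c) * col_max M q c"])
      simp_all
  then show "u v = 0"
    using col_max_pos[of c] \<open>v = ?col c\<close> by simp
qed

lemma transversal_imp_classical_basis:
  assumes B: "transversal B"
  shows "classical_basis (NECP_matrix M) q B"
proof -
  let ?col = "\<lambda>c. column c (NECP_matrix M)"
  have fin: "finite B" and card: "card B = CARD('n)"
    using B by (simp_all add: transversal_finite transversal_card)
  have inj: "inj_on ?col B" and indep: "independent (?col ` B)"
    using B by (simp_all add: transversal_inj_on_columns transversal_columns_independent)
  have "UNIV \<subseteq> span (?col ` B)"
    using card card_image[OF inj] by (intro card_ge_dim_independent[OF _ indep]) simp_all
  then obtain w where "q = (\<Sum>v\<in>?col ` B. w v *\<^sub>R v)"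
    using span_finite[of "?col ` B"] fin by auto
  then have x: "(\<Sum>c\<in>B. w (?col c) *\<^sub>R ?col c) = q"
    by (simp add: sum.reindex[OF inj])
  define x where "x c = (if c \<in> B then w (?col c) else 0)" for c
  have "(\<Sum>c\<in>B. x c *\<^sub>R ?col c) = q"
    using x by (simp add: x_def)
  moreover have "0 \<le> x c" for c
  proof (cases "c \<in> B")
    case True
    have "(\<Sum>c\<in>B. (w (?col c) * col_max M q c) * N i c) = 1" for i
      using x q_pos[of i] unfolding column_sum_eq_iff by simp
    then have "0 \<le> w (?col c) * col_max M q c"
      using True
      by (intro transversal_normalized_solution_nonneg[OF B,
            where y = "\<lambda>c. w (?col c) * col_max M q c"])
    then show ?thesis
      using True col_max_pos[of c] by (simp add: x_def zero_le_mult_iff)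
  qed (simp add: x_def)
  moreover have "\<forall>c. c \<notin> B \<longrightarrow> x c = 0"
    by (simp add: x_def)
  ultimately show ?thesis
    unfolding classical_basis_def using card inj indep by blast
qed

lemma classical_basis_eq_transversal: "classical_basis (NECP_matrix M) q = transversal"
  using classical_basis_imp_transversal transversal_imp_classical_basis by blast

lemma tropical_residual:
  "TNECP_rhs q $ i - TNECP_matrix M $ i $ c = - trop_log (scaled_matrix M q $ i $ c)"
proof -
  have rhs: "TNECP_rhs q $ i = ereal (ln (q $ i))"
    using q_pos[of i] by (simp add: TNECP_rhs_def trop_log_def)
  show ?thesis
  proof (cases c)
    case (Inl j)
    then show ?thesis
      using q_pos[of i]
      by (auto simp: rhs TNECP_matrix_def scaled_matrix_def NECP_matrix_Inl trop_log_def ln_div)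
  next
    case (Inr j)
    define a where "a = - M $ i $ j"
    have "TNECP_matrix M $ i $ c = trop_log a" "scaled_matrix M q $ i $ c = a / q $ i"
      by (simp_all add: Inr a_def TNECP_matrix_def scaled_matrix_def NECP_matrix_Inr)
    moreover have "0 < a / q $ i \<longleftrightarrow> 0 < a"
      using q_pos[of i] by (simp add: zero_less_divide_iff)
    ultimately show ?thesis
      using q_pos[of i] by (simp add: rhs trop_log_def ln_div)
  qed
qed

lemma tropical_minimizer_iff_peak:
  "(TNECP_rhs q $ i - TNECP_matrix M $ i $ c \<noteq> \<infinity> \<and>
    (\<forall>k. TNECP_rhs q $ i - TNECP_matrix M $ i $ c \<le> TNECP_rhs q $ k - TNECP_matrix M $ k $ c))
   \<longleftrightarrow> i = peak c"
proof -
  have finite_iff: "- trop_log s \<noteq> \<infinity> \<longleftrightarrow> 0 < s" for s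
    by (simp add: trop_log_def)
  have "(- trop_log (scaled_matrix M q $ i $ c) \<noteq> \<infinity> \<and>
      (\<forall>k. trop_log (scaled_matrix M q $ k $ c) \<le> trop_log (scaled_matrix M q $ i $ c)))
    \<longleftrightarrow> 0 < scaled_matrix M q $ i $ c \<and> (\<forall>k. scaled_matrix M q $ k $ c \<le> scaled_matrix M q $ i $ c)"
    by (auto simp: finite_iff trop_log_le_trop_log_iff)
  also have "\<dots> \<longleftrightarrow> scaled_matrix M q $ i $ c = col_max M q c"
    using col_max_pos[of c] scaled_matrix_le_col_max[of M q _ c] col_max_attained[of M q c]
    by (metis order.antisym order.strict_trans2)
  finally show ?thesis
    unfolding tropical_residual ereal_minus_le_minus normalized_eq_1_iff[symmetric]
      normalized_eq_1_iff_peak .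
qed

lemma tropical_basis_eq_transversal: "tropical_basis (TNECP_matrix M) (TNECP_rhs q) = transversal"
proof (intro ext iffI)
  fix B
  assume "tropical_basis (TNECP_matrix M) (TNECP_rhs q) B"
  then obtain \<phi> where \<phi>: "bij_betw \<phi> UNIV B" "\<And>i. peak (\<phi> i) = i"
    unfolding tropical_basis_def tropical_minimizer_iff_peak by metis
  have "inv_into UNIV \<phi> c = peak c" if "c \<in> B" for c
  proof -
    obtain i where "c = \<phi> i"
      using \<phi>(1) \<open>c \<in> B\<close> unfolding bij_betw_def by auto
    then show ?thesis
      using \<phi> bij_betw_imp_inj_on by (metis inv_f_f)
  qed
  moreover have "bij_betw (inv_into UNIV \<phi>) B UNIV"
    using \<phi>(1) by (rule bij_betw_inv_into)
  ultimately show "transversal B"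
    unfolding transversal_def using bij_betw_cong by blast
next
  fix B
  assume B: "transversal B"
  then have bij: "bij_betw peak B UNIV"
    unfolding transversal_def .
  then have "bij_betw (inv_into B peak) UNIV B"
    by (rule bij_betw_inv_into)
  moreover have "peak (inv_into B peak i) = i" for i
    using bij by (simp add: f_inv_into_f bij_betw_def)
  ultimately show "tropical_basis (TNECP_matrix M) (TNECP_rhs q) B"
    unfolding tropical_basis_def tropical_minimizer_iff_peak
    using transversal_card[OF B] by metis
qed

end

section \<open>Solutions from fully labeled bases\<close>

lemma LH_run_last:
  assumes "LH_run isB jstar Bs Gs"
  shows "isB (last Bs)" "fully_labeled (last Bs)"
proof -
  have "2 \<le> length Bs" and "\<forall>t < length Bs - 1. isB (Bs ! Suc t)"
    and "fully_labeled (last Bs)"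
    using assms unfolding LH_run_def by auto
  moreover have "last Bs = Bs ! Suc (length Bs - 2)"
    using \<open>2 \<le> length Bs\<close> by (subst last_conv_nth) (auto simp: Suc_diff_Suc numeral_2_eq_2)
  ultimately show "isB (last Bs)" "fully_labeled (last Bs)"
    by auto
qed

lemma fully_labeled_complementary:
  fixes B :: "('n::finite + 'n) set"
  assumes "fully_labeled B" "card B = CARD('n)" "Inl i \<in> B"
  shows "Inr i \<notin> B"
proof
  assume "Inr i \<in> B"
  let ?label = "case_sum id id :: 'n + 'n \<Rightarrow> 'n"
  have "?label ` B = UNIV"
    using assms(1) unfolding fully_labeled_def by (metis UNIV_eq_I id_apply image_eqI sum.case)
  then have "inj_on ?label B"
    using assms(2) card_ge_0_finite[of B] by (intro eq_card_imp_inj_on) auto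
  then show False
    using inj_onD[of ?label B "Inl i" "Inr i"] assms(3) \<open>Inr i \<in> B\<close> by simp
qed

lemma NECP_matrix_column_sum:
  "(\<Sum>c\<in>UNIV. x c *\<^sub>R column c (NECP_matrix M)) = (\<chi> i. x (Inl i)) - M *v (\<chi> j. x (Inr j))"
proof -
  have "(\<Sum>c\<in>UNIV. x c * NECP_matrix M $ i $ c) =
      (\<Sum>j\<in>UNIV. x (Inl j) * NECP_matrix M $ i $ Inl j) +
      (\<Sum>j\<in>UNIV. x (Inr j) * NECP_matrix M $ i $ Inr j)" for i
    by (subst UNIV_Plus_UNIV[symmetric], subst sum.Plus) (simp_all add: comp_def)
  also have "\<dots> i = x (Inl i) - (\<Sum>j\<in>UNIV. M $ i $ j * x (Inr j))" for i
    by (simp add: NECP_matrix_Inl NECP_matrix_Inr sum_negf mult.commute if_distrib[of "\<lambda>a. _ * a"]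
        cong: if_cong)
  finally show ?thesis
    by (simp add: vec_eq_iff column_def matrix_vector_mult_def)
qed

lemma basis_of_solution_if_fully_labeled:
  fixes M :: "real^'n^'n"
  assumes q: "\<And>i. 0 < q $ i" and B: "classical_basis (NECP_matrix M) q B"
    and "fully_labeled B" and "Inr j \<in> B"
  shows "basis_of_solution M q B"
proof -
  obtain x where card: "card B = CARD('n)" and nonneg: "\<And>c. 0 \<le> x c"
    and supp: "\<And>c. c \<notin> B \<Longrightarrow> x c = 0"
    and x: "(\<Sum>c\<in>B. x c *\<^sub>R column c (NECP_matrix M)) = q"
    using B unfolding classical_basis_def by blast
  define w :: "real^'n" where "w = (\<chi> i. x (Inl i))"
  define z :: "real^'n" where "z = (\<chi> j. x (Inr j))"
  have "(\<Sum>c\<in>UNIV. x c *\<^sub>R column c (NECP_matrix M)) = q"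
    using x supp by (subst sum.mono_neutral_right) auto
  then have w: "w = M *v z + q"
    unfolding NECP_matrix_column_sum w_def z_def by (simp add: algebra_simps)
  have "x (Inl i) * x (Inr i) = 0" for i
    using fully_labeled_complementary[OF \<open>fully_labeled B\<close> card] supp
    by (metis mult_zero_left mult_zero_right)
  then have "w \<bullet> z = 0"
    by (simp add: inner_vec_def w_def z_def sum.neutral)
  moreover have "z \<noteq> 0"
  proof
    assume "z = 0"
    then have "w = q"
      using w by simp
    then have "x (Inl i) = q $ i" for i
      unfolding w_def by (metis vec_lambda_beta)
    then have "range Inl \<subseteq> B"
      using q supp by (metis less_irrefl image_subsetI)
    then have "range Inl = B"
      using card card_ge_0_finite[of B] by (intro card_subset_eq) (auto simp: card_image)
    then show False
      using \<open>Inr j \<in> B\<close> by auto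
  qed
  moreover have "\<forall>i. 0 \<le> w $ i" "\<forall>j. 0 \<le> z $ j"
    using nonneg by (simp_all add: w_def z_def)
  moreover have "\<forall>i. w $ i \<noteq> 0 \<longrightarrow> Inl i \<in> B" "\<forall>j. z $ j \<noteq> 0 \<longrightarrow> Inr j \<in> B"
    using supp by (auto simp: w_def z_def)
  ultimately show ?thesis
    unfolding basis_of_solution_def NECP_solution_def using B w by blast
qed

theorem theorem5p6:
  fixes M :: "real^'n^'n" and q :: "real^'n" and jstar :: 'n
  assumes "NECP_instance M q"
    and "dominance M q"
  shows "\<exists>Bs Gs.
           LH_run (classical_basis (NECP_matrix M) q) jstar Bs Gs \<and>
           LH_run (tropical_basis (TNECP_matrix M) (TNECP_rhs q)) jstar Bs Gs \<and>
           length Bs - 1 \<le> 2 * CARD('n) - 1 \<and>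
           basis_of_solution M q (last Bs)"
proof -
  interpret dominant_NECP M q
    using assms by unfold_locales
  obtain Bs Gs j where run: "LH_run transversal jstar Bs Gs"
    and length: "length Bs - 1 \<le> 2 * CARD('n) - 1" and "Inr j \<in> last Bs"
    using LH_run_exists[of jstar] by blast
  then have "basis_of_solution M q (last Bs)"
    using LH_run_last[OF run] q_pos
    by (intro basis_of_solution_if_fully_labeled) (simp_all add: classical_basis_eq_transversal)
  then show ?thesis
    using run length
    unfolding classical_basis_eq_transversal tropical_basis_eq_transversal by blast
qed

end
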